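(* (I) Massless regime: if $q=e^{\eta}$ with $\eta\in i\mathbb{R}$ (so $q$ is a pure phase) and all inhomogeneities $\eta_1,\dots,\eta_{\mathsf N}$ are real, then $\bar{\mathsf T}(\lambda)$ is a normal operator for every $\lambda\in\mathbb C$, and $i\,\bar{\mathsf T}(\lambda)$ is self-adjoint for every $\lambda$ with $\lambda q^{1/2}\in\mathbb{R}$ (where $q^{1/2}=e^{\eta/2}$). (II) Massive regime: if $\eta\in\mathbb{R}$ (so $q>0$) and all inhomogeneities $\eta_1,\dots,\eta_{\mathsf N}$ are pure phases, then $\bar{\mathsf T}(\lambda)$ is a normal operator for every $\lambda\in\mathbb C$, and $i^{\mathsf e_{\mathsf N}}\bar{\mathsf T}(\lambda)$ is self-adjoint for every $\lambda$ with $\lambda q^{1/2}$ a pure phase, where $\mathsf e_{\mathsf N}=1$ if $\mathsf N$ is even and $\mathsf e_{\mathsf N}=0$ if $\mathsf N$ is odd. Adjoints are taken with respect to the standard Hermitian inner product on $\mathcal R_{\mathsf N}=(\mathbb C^2)^{\otimes\mathsf N}$ for which the tensor products of the $\sigma^z$-eigenvectors form an orthonormal basis.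
   Context: Fix $q=e^{\eta}\in\mathbb C$, $q\neq\pm1$, an integer $\mathsf N\ge1$ and inhomogeneities $\eta_1,\dots,\eta_{\mathsf N}\in\mathbb C\setminus\{0\}$. Let $\mathcal R_{\mathsf N}=\bigotimes_{n=1}^{\mathsf N}\mathbb C^2$. On the $n$-th factor let $|1,n\rangle,|-1,n\rangle$ be the basis of $\sigma^z_n$-eigenvectors (eigenvalues $\pm1$), $\sigma^{x},\sigma^y,\sigma^z$ the Pauli matrices, $\sigma^+=E_{12}$ (so $\sigma^+|-1\rangle=|1\rangle$), $\sigma^-=E_{21}$; $X_n$ denotes a $2\times2$ matrix $X$ acting on the $n$-th factor. With an auxiliary space $\mathbb C^2$ (label $0$), the Lax operator is the $2\times2$ matrix in space $0$ $\mathsf L_{0n}(\lambda)=\begin{pmatrix}x_+(\lambda)+x_-(\lambda)\sigma^z_n & (q-q^{-1})\sigma^-_n\\ (q-q^{-1})\sigma^+_n & x_+(\lambda)-x_-(\lambda)\sigma^z_n\end{pmatrix}$, $x_\pm(\lambda)=\tfrac12\big(\lambda q-(q\lambda)^{-1}\pm(\lambda-\lambda^{-1})\big)$. The monodromy matrix is $\mathsf M_0(\lambda)=\mathsf L_{0\mathsf N}(\lambda/\eta_{\mathsf N})\cdots\mathsf L_{01}(\lambda/\eta_1)=\begin{pmatrix}\mathsf A(\lambda)&\mathsf B(\lambda)\\ \mathsf C(\lambda)&\mathsf D(\lambda)\end{pmatrix}$ with entries in $\mathrm{End}(\mathcal R_{\mathsf N})$, and the antiperiodic transfer matrix is $\bar{\mathsf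 T}(\lambda)=\mathsf B(\lambda)+\mathsf C(\lambda)$. *)

theory Defs
  imports Complex_Main
begin

text \<open>Model of the quantum space (C^2)^{tensor N}, sites 1..N. A basis vector
(tensor product of sigma^z eigenvectors) is encoded by the set S of sites
carrying the eigenvalue +1 (state |1,n>); the other sites carry |-1,n>. An operator is given
by its matrix entries  A S T = <S|A|T>  in this orthonormal basis.\<close>

type_synonym op = "nat set \<Rightarrow> nat set \<Rightarrow> complex"

definition configs :: "nat \<Rightarrow> nat set set" where
  "configs N = Pow {1..N}"

definition op_mult :: "nat \<Rightarrow> op \<Rightarrow> op \<Rightarrow> op" where
  "op_mult N A B = (\<lambda>S T. \<Sum>U\<in>configs N. A S U * B U T)"

definition op_add :: "op \<Rightarrow> op \<Rightarrow> op" where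
  "op_add A B = (\<lambda>S T. A S T + B S T)"

definition op_scale :: "complex \<Rightarrow> op \<Rightarrow> op" where
  "op_scale c A = (\<lambda>S T. c * A S T)"

definition op_id :: op where
  "op_id = (\<lambda>S T. if S = T then 1 else 0)"

text \<open>Adjoint w.r.t. the Hermitian inner product making the basis orthonormal.\<close>
definition op_adj :: "op \<Rightarrow> op" where
  "op_adj A = (\<lambda>S T. cnj (A T S))"

definition op_eq :: "nat \<Rightarrow> op \<Rightarrow> op \<Rightarrow> bool" where
  "op_eq N A B \<longleftrightarrow> (\<forall>S\<in>configs N. \<forall>T\<in>configs N. A S T = B S T)"

definition normal_op :: "nat \<Rightarrow> op \<Rightarrow> bool" where
  "normal_op N A \<longleftrightarrow> op_eq N (op_mult N A (op_adj A)) (op_mult N (op_adj A) A)"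

definition self_adjoint_op :: "nat \<Rightarrow> op \<Rightarrow> bool" where
  "self_adjoint_op N A \<longleftrightarrow> op_eq N (op_adj A) A"

text \<open>2x2 matrices on a single C^2 factor, indexed by booleans:
True = |1> (sigma^z eigenvalue +1, first basis vector), False = |-1>.\<close>
type_synonym mat2 = "bool \<Rightarrow> bool \<Rightarrow> complex"

definition sigma_z :: mat2 where
  "sigma_z = (\<lambda>a b. if a = b then (if a then 1 else -1) else 0)"

definition sigma_plus :: mat2 where
  "sigma_plus = (\<lambda>a b. if a \<and> \<not> b then 1 else 0)"

definition sigma_minus :: mat2 where
  "sigma_minus = (\<lambda>a b. if \<not> a \<and> b then 1 else 0)"

text \<open>X_n: the 2x2 matrix X acting on the n-th tensor factor.\<close>
definition local_op :: "nat \<Rightarrow> mat2 \<Rightarrow> op" where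
  "local_op n X = (\<lambda>S T. if S - {n} = T - {n} then X (n \<in> S) (n \<in> T) else 0)"

text \<open>2x2 matrices in the auxiliary space 0 with operator entries,
indexed by 0,1 (i.e. rows/columns 1,2 of the paper).\<close>
type_synonym auxmat = "nat \<Rightarrow> nat \<Rightarrow> op"

definition aux_mult :: "nat \<Rightarrow> auxmat \<Rightarrow> auxmat \<Rightarrow> auxmat" where
  "aux_mult N M1 M2 = (\<lambda>a b. \<lambda>S T. \<Sum>c<2. op_mult N (M1 a c) (M2 c b) S T)"

definition aux_id :: auxmat where
  "aux_id = (\<lambda>a b. if a = b then op_id else (\<lambda>S T. 0))"

definition x_plus :: "complex \<Rightarrow> complex \<Rightarrow> complex" where
  "x_plus q z = (z * q - inverse (q * z) + (z - inverse z)) / 2"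

definition x_minus :: "complex \<Rightarrow> complex \<Rightarrow> complex" where
  "x_minus q z = (z * q - inverse (q * z) - (z - inverse z)) / 2"

definition lax :: "complex \<Rightarrow> nat \<Rightarrow> complex \<Rightarrow> auxmat" where
  "lax q n z = (\<lambda>a b.
     if a = 0 \<and> b = 0 then op_add (op_scale (x_plus q z) op_id) (op_scale (x_minus q z) (local_op n sigma_z))
     else if a = 0 \<and> b = 1 then op_scale (q - inverse q) (local_op n sigma_minus)
     else if a = 1 \<and> b = 0 then op_scale (q - inverse q) (local_op n sigma_plus)
     else if a = 1 \<and> b = 1 then op_add (op_scale (x_plus q z) op_id) (op_scale (- x_minus q z) (local_op n sigma_z))
     else (\<lambda>S T. 0))"

text \<open>Partial monodromy  L_{0k}(\<lambda>/\<eta>_k) ... L_{01}(\<lambda>/\<eta>_1), computed with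
operator products on the N-site space.\<close>
primrec monodromy_upto :: "nat \<Rightarrow> complex \<Rightarrow> (nat \<Rightarrow> complex) \<Rightarrow> complex \<Rightarrow> nat \<Rightarrow> auxmat" where
  "monodromy_upto N q inh z 0 = aux_id"
| "monodromy_upto N q inh z (Suc k) =
     aux_mult N (lax q (Suc k) (z / inh (Suc k))) (monodromy_upto N q inh z k)"

definition monodromy :: "nat \<Rightarrow> complex \<Rightarrow> (nat \<Rightarrow> complex) \<Rightarrow> complex \<Rightarrow> auxmat" where
  "monodromy N q inh z = monodromy_upto N q inh z N"

definition antiperiodic_transfer :: "nat \<Rightarrow> complex \<Rightarrow> (nat \<Rightarrow> complex) \<Rightarrow> complex \<Rightarrow> op" where
  "antiperiodic_transfer N q inh z = op_add (monodromy N q inh z 0 1) (monodromy N q inh z 1 0)"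

end

theory Submission
  imports Defs "HOL-Complex_Analysis.Conformal_Mappings"
begin

(* Everything is done on matrix elements in the orthonormal sigma^z basis.
   1. A matrix element of the partial monodromy L_k(z/inh k) ... L_1(z/inh 1) between two
      basis configurations S, T factors through a scalar recursion (mono_entry) built from
      the single-site matrix elements of the Lax operator (lax_entry).
   2. The Lax operator satisfies the local RLL relation with the six-vertex R-matrix; by
      induction over the sites the monodromy satisfies the RTT relation.  Four components of
      RTT show that T(l) and T(m) commute as soon as R(l/m) is non-degenerate, i.e. for all
      but finitely many l.
   3. The matrix elements of T(l) T(m) - T(m) T(l) are holomorphic in l on C - {0}, so by
      analytic continuation T(l) and T(m) commute for all l, m <> 0.
   4. In each regime the Lax operator has a site-wise conjugation symmetry which lifts to
      T(z)^* = +-T(z') for an explicit z'.  Normality follows from step 3; self-adjointness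
      follows from z' = z (massless regime), resp. z' = -z together with the parity
      T(-z) = (-1)^(N+1) T(z) (massive regime). *)


definition lax_entry :: "complex \<Rightarrow> complex \<Rightarrow> nat \<Rightarrow> nat \<Rightarrow> bool \<Rightarrow> bool \<Rightarrow> complex" where
  "lax_entry q w a b s t =
    (if a = 0 \<and> b = 0 then x_plus q w * (if s = t then 1 else 0) + x_minus q w * sigma_z s t
     else if a = 0 \<and> b = 1 then (q - inverse q) * sigma_minus s t
     else if a = 1 \<and> b = 0 then (q - inverse q) * sigma_plus s t
     else if a = 1 \<and> b = 1 then x_plus q w * (if s = t then 1 else 0) - x_minus q w * sigma_z s t
     else 0)"

definition r_matrix :: "complex \<Rightarrow> complex \<Rightarrow> nat \<Rightarrow> nat \<Rightarrow> nat \<Rightarrow> nat \<Rightarrow> complex" where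
  "r_matrix q u a b c d =
    (if a = c \<and> b = d then (if a = b then u * q - inverse (u * q) else u - inverse u)
     else if a \<noteq> b \<and> c = b \<and> d = a then q - inverse q else 0)"

text \<open>Matrix element of \<open>L_ac(w1) L_bd(w2)\<close> on one site (the two Lax operators act
  on different auxiliary spaces but on the same quantum site).\<close>
definition lax_pair :: "complex \<Rightarrow> complex \<Rightarrow> complex \<Rightarrow> nat \<Rightarrow> nat \<Rightarrow> nat \<Rightarrow> nat \<Rightarrow> bool \<Rightarrow> bool \<Rightarrow> complex" where
  "lax_pair q w1 w2 a b c d s t =
     lax_entry q w1 a c s True * lax_entry q w2 b d True t
   + lax_entry q w1 a c s False * lax_entry q w2 b d False t"

lemma less_2_cases: "(a::nat) < 2 \<Longrightarrow> a = 0 \<or> a = 1"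
  by auto

lemma sum_lessThan_2: "(\<Sum>c<2. f c) = f 0 + f (1::nat)"
  by (simp add: numeral_2_eq_2)

lemma rll_relation:
  assumes "w1 \<noteq> 0" "w2 \<noteq> 0" "q \<noteq> 0" "a < 2" "b < 2" "g < 2" "h < 2"
  shows "(\<Sum>c<2. \<Sum>d<2. r_matrix q (w1/w2) a b c d * lax_pair q w1 w2 c d g h s t) =
         (\<Sum>c<2. \<Sum>d<2. lax_pair q w2 w1 b a d c s t * r_matrix q (w1/w2) c d g h)"
  using less_2_cases[OF assms(4)] less_2_cases[OF assms(5)]
    less_2_cases[OF assms(6)] less_2_cases[OF assms(7)]
  apply (simp only: sum_lessThan_2)
  apply (cases s; cases t; elim disjE;
      simp add: r_matrix_def lax_pair_def lax_entry_def x_plus_def x_minus_def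
        sigma_z_def sigma_plus_def sigma_minus_def)
  using assms(1-3) by (auto simp: field_simps)

lemma lax_entries:
  "a < 2 \<Longrightarrow> b < 2 \<Longrightarrow>
    lax q n w a b S T = (if S - {n} = T - {n} then lax_entry q w a b (n \<in> S) (n \<in> T) else 0)"
  by (auto dest!: less_2_cases
      simp: lax_def op_add_def op_scale_def op_id_def local_op_def lax_entry_def)


section \<open>Matrix elements of the monodromy\<close>

lemma sum_site_local:
  assumes "n \<in> {1..N}" "S \<in> configs N"
  shows "(\<Sum>U\<in>configs N. (if S - {n} = U - {n} then h U else 0)) = h (insert n S) + h (S - {n})"
proof -
  have fin: "finite (configs N)" by (simp add: configs_def)
  have neighbours: "{U \<in> configs N. S - {n} = U - {n}} = {insert n S, S - {n}}"
  proof (intro set_eqI iffI)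
    fix U assume "U \<in> {U \<in> configs N. S - {n} = U - {n}}"
    then have same: "S - {n} = U - {n}" by simp
    show "U \<in> {insert n S, S - {n}}"
    proof (cases "n \<in> U")
      case True
      then have "U = insert n (S - {n})" using same by blast
      then show ?thesis by simp
    next
      case False
      then have "U = S - {n}" using same by blast
      then show ?thesis by simp
    qed
  next
    fix U assume "U \<in> {insert n S, S - {n}}"
    then show "U \<in> {U \<in> configs N. S - {n} = U - {n}}" using assms by (auto simp: configs_def)
  qed
  have "(\<Sum>U\<in>configs N. (if S - {n} = U - {n} then h U else 0)) = sum h {U \<in> configs N. S - {n} = U - {n}}"
    by (rule sum.inter_filter[OF fin, symmetric])
  also have "\<dots> = h (insert n S) + h (S - {n})"
    unfolding neighbours by (subst sum.insert) auto
  finally show ?thesis .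
qed

primrec mono_entry :: "complex \<Rightarrow> (nat \<Rightarrow> complex) \<Rightarrow> complex \<Rightarrow> nat \<Rightarrow> nat set \<Rightarrow> nat set \<Rightarrow> nat \<Rightarrow> nat \<Rightarrow> complex" where
  "mono_entry q inh z 0 S T a b = (if a = b then 1 else 0)"
| "mono_entry q inh z (Suc k) S T a b =
     (\<Sum>c<2. lax_entry q (z / inh (Suc k)) a c (Suc k \<in> S) (Suc k \<in> T) * mono_entry q inh z k S T c b)"

lemma mono_entry_cong:
  "(\<And>j. 1 \<le> j \<Longrightarrow> j \<le> k \<Longrightarrow> (j \<in> S \<longleftrightarrow> j \<in> S') \<and> (j \<in> T \<longleftrightarrow> j \<in> T')) \<Longrightarrow>
    mono_entry q inh z k S T = mono_entry q inh z k S' T'"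
proof (induction k)
  case 0
  show ?case by (simp add: fun_eq_iff)
next
  case (Suc k)
  then have "mono_entry q inh z k S T = mono_entry q inh z k S' T'" by auto
  moreover have "(Suc k \<in> S) = (Suc k \<in> S')" "(Suc k \<in> T) = (Suc k \<in> T')"
    using Suc.prems by auto
  ultimately show ?case by (simp add: fun_eq_iff)
qed

lemma agree_outside_insert:
  assumes "n \<notin> A"
  shows "(insert n S - A = T - A) \<longleftrightarrow> n \<in> T \<and> S - insert n A = T - insert n A"
    and "(S - {n} - A = T - A) \<longleftrightarrow> n \<notin> T \<and> S - insert n A = T - insert n A"
  using assms by blast+

lemma monodromy_upto_entry:
  assumes "k \<le> N" "a < 2" "b < 2" "S \<in> configs N"
  shows "monodromy_upto N q inh z k a b S T =
           (if S - {1..k} = T - {1..k} then mono_entry q inh z k S T a b else 0)"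
  using assms
proof (induction k arbitrary: S a b)
  case 0
  then show ?case by (auto simp: aux_id_def op_id_def)
next
  case (Suc k)
  let ?n = "Suc k"
  let ?L = "\<lambda>c s'. lax_entry q (z / inh ?n) a c (?n \<in> S) s'"
  let ?G = "\<lambda>c. mono_entry q inh z k S T c b"
  let ?same = "S - {1..?n} = T - {1..?n}"
  have n: "?n \<in> {1..N}" using Suc.prems by auto
  have neighbours: "insert ?n S \<in> configs N" "S - {?n} \<in> configs N"
    using Suc.prems n by (auto simp: configs_def)
  have up: "monodromy_upto N q inh z k c b (insert ?n S) T = (if ?n \<in> T \<and> ?same then ?G c else 0)"
    and down: "monodromy_upto N q inh z k c b (S - {?n}) T = (if ?n \<notin> T \<and> ?same then ?G c else 0)"
    if "c < 2" for c
  proof -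
    have "(insert ?n S - {1..k} = T - {1..k}) \<longleftrightarrow> ?n \<in> T \<and> ?same"
      "(S - {?n} - {1..k} = T - {1..k}) \<longleftrightarrow> ?n \<notin> T \<and> ?same"
      using agree_outside_insert[of ?n "{1..k}" S T] by (simp_all add: atLeastAtMostSuc_conv)
    moreover have "mono_entry q inh z k (insert ?n S) T = mono_entry q inh z k S T"
      "mono_entry q inh z k (S - {?n}) T = mono_entry q inh z k S T"
      by (rule mono_entry_cong; auto)+
    ultimately show "monodromy_upto N q inh z k c b (insert ?n S) T = (if ?n \<in> T \<and> ?same then ?G c else 0)"
      "monodromy_upto N q inh z k c b (S - {?n}) T = (if ?n \<notin> T \<and> ?same then ?G c else 0)"
      using Suc.IH[where S = "insert ?n S" and a = c] Suc.IH[where S = "S - {?n}" and a = c] neighbours that Suc.prems by simp_all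
  qed
  have "monodromy_upto N q inh z ?n a b S T =
     (\<Sum>c<2. \<Sum>U\<in>configs N. (if S - {?n} = U - {?n}
        then ?L c (?n \<in> U) * monodromy_upto N q inh z k c b U T else 0))"
    using Suc.prems by (auto simp: aux_mult_def op_mult_def lax_entries intro!: sum.cong)
  also have "\<dots> = (\<Sum>c<2. ?L c True * monodromy_upto N q inh z k c b (insert ?n S) T
                       + ?L c False * monodromy_upto N q inh z k c b (S - {?n}) T)"
    by (rule sum.cong[OF refl], subst sum_site_local[OF n Suc.prems(4)]) simp
  also have "\<dots> = (\<Sum>c<2. ?L c True * (if ?n \<in> T \<and> ?same then ?G c else 0)
                       + ?L c False * (if ?n \<notin> T \<and> ?same then ?G c else 0))"
    by (rule sum.cong[OF refl]) (simp add: up down)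
  also have "\<dots> = (if ?same then mono_entry q inh z ?n S T a b else 0)"
    by (cases "?n \<in> T") (auto intro!: sum.cong)
  finally show ?case .
qed

lemma transfer_entry:
  assumes "S \<in> configs N" "T \<in> configs N"
  shows "antiperiodic_transfer N q inh z S T = mono_entry q inh z N S T 0 1 + mono_entry q inh z N S T 1 0"
proof -
  have "S - {1..N} = T - {1..N}" using assms by (auto simp: configs_def)
  then show ?thesis
    unfolding antiperiodic_transfer_def op_add_def monodromy_def
    using monodromy_upto_entry[of N N 0 1 S q inh z T] monodromy_upto_entry[of N N 1 0 S q inh z T] assms
    by simp
qed


section \<open>The RTT relation\<close>

text \<open>Matrix element of \<open>M_ae(l) M_bf(m)\<close> for the partial monodromy on sites \<open>1..k\<close>.\<close>
definition mono_pair :: "complex \<Rightarrow> (nat \<Rightarrow> complex) \<Rightarrow> complex \<Rightarrow> complex \<Rightarrow> nat \<Rightarrow> nat set \<Rightarrow> nat set \<Rightarrow>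
    nat \<Rightarrow> nat \<Rightarrow> nat \<Rightarrow> nat \<Rightarrow> complex" where
  "mono_pair q inh l m k S T a b e f =
     (\<Sum>U\<in>Pow {1..k}. mono_entry q inh l k S U a e * mono_entry q inh m k U T b f)"

lemma sum_Pow_atLeastAtMost_Suc:
  "(\<Sum>U\<in>Pow {1..Suc k}. F U) = (\<Sum>U\<in>Pow {1..k}. F U + F (insert (Suc k) U))"
proof -
  have inj: "inj_on (insert (Suc k)) (Pow {1..k})"
    unfolding inj_on_def by (metis Diff_insert_absorb PowD Suc_n_not_le_n atLeastAtMost_iff subsetD)
  have "Pow {1..Suc k} = Pow {1..k} \<union> insert (Suc k) ` Pow {1..k}"
    by (simp add: atLeastAtMostSuc_conv Pow_insert)
  moreover have "Pow {1..k} \<inter> insert (Suc k) ` Pow {1..k} = {}" by auto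
  ultimately have "(\<Sum>U\<in>Pow {1..Suc k}. F U) = sum F (Pow {1..k}) + sum F (insert (Suc k) ` Pow {1..k})"
    by (simp add: sum.union_disjoint)
  also have "\<dots> = (\<Sum>U\<in>Pow {1..k}. F U + F (insert (Suc k) U))"
    unfolding sum.distrib by (subst sum.reindex[OF inj]) simp
  finally show ?thesis .
qed

lemma sum_swap_2x2:
  "(\<Sum>U\<in>A. \<Sum>c<(2::nat). \<Sum>d<(2::nat). X c d * G U c d) = (\<Sum>c<2. \<Sum>d<2. (X c d::complex) * (\<Sum>U\<in>A. G U c d))"
  by (simp add: sum_lessThan_2 sum.distrib sum_distrib_left)

lemma mono_pair_Suc:
  "mono_pair q inh l m (Suc k) S T a b e f =
    (\<Sum>c<2. \<Sum>d<2. lax_pair q (l / inh (Suc k)) (m / inh (Suc k)) a b c d (Suc k \<in> S) (Suc k \<in> T)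
                  * mono_pair q inh l m k S T c d e f)"
proof -
  let ?n = "Suc k"
  let ?H = "\<lambda>c d. lax_pair q (l / inh ?n) (m / inh ?n) a b c d (?n \<in> S) (?n \<in> T)"
  define G where "G U c d = mono_entry q inh l k S U c e * mono_entry q inh m k U T d f" for U c d
  have split: "mono_entry q inh l ?n S U a e * mono_entry q inh m ?n U T b f
       + mono_entry q inh l ?n S (insert ?n U) a e * mono_entry q inh m ?n (insert ?n U) T b f
     = (\<Sum>c<2. \<Sum>d<2. ?H c d * G U c d)" if "U \<in> Pow {1..k}" for U
  proof -
    have "?n \<notin> U" using that by auto
    moreover have "mono_entry q inh l k S (insert ?n U) = mono_entry q inh l k S U"
      "mono_entry q inh m k (insert ?n U) T = mono_entry q inh m k U T"
      by (rule mono_entry_cong; auto)+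
    ultimately show ?thesis
      unfolding G_def lax_pair_def by (simp add: sum_lessThan_2 algebra_simps)
  qed
  have "mono_pair q inh l m ?n S T a b e f = (\<Sum>U\<in>Pow {1..k}. \<Sum>c<2. \<Sum>d<2. ?H c d * G U c d)"
    unfolding mono_pair_def sum_Pow_atLeastAtMost_Suc by (rule sum.cong[OF refl split])
  also have "\<dots> = (\<Sum>c<2. \<Sum>d<2. ?H c d * mono_pair q inh l m k S T c d e f)"
    unfolding sum_swap_2x2 mono_pair_def G_def ..
  finally show ?thesis .
qed

lemma sum_2x2_assoc:
  fixes A C :: "nat \<Rightarrow> nat \<Rightarrow> complex" and B :: "nat \<Rightarrow> nat \<Rightarrow> nat \<Rightarrow> nat \<Rightarrow> complex"
  shows "(\<Sum>c<2. \<Sum>d<2. A c d * (\<Sum>g<2. \<Sum>h<2. B c d g h * C g h)) =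
         (\<Sum>g<2. \<Sum>h<2. (\<Sum>c<2. \<Sum>d<2. A c d * B c d g h) * C g h)"
  by (simp only: sum_lessThan_2) (simp add: algebra_simps)

lemma rtt_relation:
  assumes inh: "\<forall>n\<in>{1..k}. inh n \<noteq> 0" and l: "l \<noteq> 0" and m: "m \<noteq> 0" and q: "q \<noteq> 0"
    and ab: "a < 2" "b < 2" and ef: "e < 2" "f < 2"
  shows "(\<Sum>c<2. \<Sum>d<2. r_matrix q (l/m) a b c d * mono_pair q inh l m k S T c d e f) =
         (\<Sum>c<2. \<Sum>d<2. mono_pair q inh m l k S T b a d c * r_matrix q (l/m) c d e f)"
  using inh ab
proof (induction k arbitrary: a b)
  case 0
  show ?case
    using less_2_cases[OF 0(2)] less_2_cases[OF 0(3)] less_2_cases[OF ef(1)] less_2_cases[OF ef(2)]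
    by (elim disjE) (simp_all add: sum_lessThan_2 mono_pair_def r_matrix_def)
next
  case (Suc k)
  let ?s = "Suc k \<in> S" and ?t = "Suc k \<in> T"
  let ?R = "r_matrix q (l/m)"
  define w1 where "w1 = l / inh (Suc k)"
  define w2 where "w2 = m / inh (Suc k)"
  have "inh (Suc k) \<noteq> 0" using Suc.prems by auto
  then have w12: "w1 / w2 = l / m" and w1: "w1 \<noteq> 0" and w2: "w2 \<noteq> 0"
    using l m unfolding w1_def w2_def by (auto simp: field_simps)
  have IH: "\<And>c d. c < 2 \<Longrightarrow> d < 2 \<Longrightarrow>
      (\<Sum>g<2. \<Sum>h<2. ?R c d g h * mono_pair q inh l m k S T g h e f) =
      (\<Sum>g<2. \<Sum>h<2. mono_pair q inh m l k S T d c h g * ?R g h e f)"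
    using Suc.IH Suc.prems by auto
  have "(\<Sum>c<2. \<Sum>d<2. ?R a b c d * mono_pair q inh l m (Suc k) S T c d e f)
     = (\<Sum>g<2. \<Sum>h<2. (\<Sum>c<2. \<Sum>d<2. ?R a b c d * lax_pair q w1 w2 c d g h ?s ?t)
                        * mono_pair q inh l m k S T g h e f)"
    unfolding mono_pair_Suc w1_def[symmetric] w2_def[symmetric] by (rule sum_2x2_assoc)
  also have "\<dots> = (\<Sum>g<2. \<Sum>h<2. (\<Sum>c<2. \<Sum>d<2. lax_pair q w2 w1 b a d c ?s ?t * ?R c d g h)
                        * mono_pair q inh l m k S T g h e f)"
    using rll_relation[OF w1 w2 q] Suc.prems unfolding w12 by (intro sum.cong refl) auto
  also have "\<dots> = (\<Sum>c<2. \<Sum>d<2. lax_pair q w2 w1 b a d c ?s ?t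
                        * (\<Sum>g<2. \<Sum>h<2. mono_pair q inh m l k S T d c h g * ?R g h e f))"
    unfolding sum_2x2_assoc[symmetric] by (intro sum.cong refl) (simp add: IH)
  also have "\<dots> = (\<Sum>g<2. \<Sum>h<2. mono_pair q inh m l (Suc k) S T b a h g * ?R g h e f)"
    unfolding mono_pair_Suc w1_def w2_def by (simp only: sum_lessThan_2) (simp add: algebra_simps)
  finally show ?case .
qed


section \<open>Commutativity of the transfer matrices\<close>

text \<open>\<open>T(l) T(m)\<close> is the twisted trace of \<open>M_1(l) M_2(m)\<close>.\<close>
lemma transfer_product_entry:
  assumes "S \<in> configs N" "T \<in> configs N"
  shows "op_mult N (antiperiodic_transfer N q inh l) (antiperiodic_transfer N q inh m) S T =
    mono_pair q inh l m N S T 0 0 1 1 + mono_pair q inh l m N S T 0 1 1 0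
  + mono_pair q inh l m N S T 1 0 0 1 + mono_pair q inh l m N S T 1 1 0 0"
proof -
  have "op_mult N (antiperiodic_transfer N q inh l) (antiperiodic_transfer N q inh m) S T =
     (\<Sum>U\<in>Pow {1..N}. (mono_entry q inh l N S U 0 1 + mono_entry q inh l N S U 1 0)
                     * (mono_entry q inh m N U T 0 1 + mono_entry q inh m N U T 1 0))"
    unfolding op_mult_def using assms by (intro sum.cong) (auto simp: configs_def transfer_entry)
  then show ?thesis
    unfolding mono_pair_def by (simp add: algebra_simps sum.distrib)
qed

lemma twisted_trace_from_rtt:
  fixes X Y :: "nat \<Rightarrow> nat \<Rightarrow> nat \<Rightarrow> nat \<Rightarrow> complex"
  assumes rtt: "\<And>a b e f. a < 2 \<Longrightarrow> b < 2 \<Longrightarrow> e < 2 \<Longrightarrow> f < 2 \<Longrightarrow>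
      (\<Sum>c<2. \<Sum>d<2. r_matrix q u a b c d * X c d e f) = (\<Sum>c<2. \<Sum>d<2. Y b a d c * r_matrix q u c d e f)"
    and A_nz: "u * q - inverse (u * q) \<noteq> 0"
    and BC_nz: "(u - inverse u)^2 \<noteq> (q - inverse q)^2"
  shows "X 0 0 1 1 + X 0 1 1 0 + X 1 0 0 1 + X 1 1 0 0 = Y 0 0 1 1 + Y 0 1 1 0 + Y 1 0 0 1 + Y 1 1 0 0"
proof -
  define A where "A = u * q - inverse (u * q)"
  define B where "B = u - inverse u"
  define C where "C = q - inverse q"
  note R = rtt[simplified sum_lessThan_2 r_matrix_def, folded A_def B_def C_def]
  have diag: "A * X 0 0 1 1 = A * Y 0 0 1 1" "A * X 1 1 0 0 = A * Y 1 1 0 0"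
    using R[of 0 0 1 1] R[of 1 1 0 0] by simp_all
  have off: "B * X 0 1 1 0 + C * X 1 0 1 0 = B * Y 1 0 0 1 + C * Y 1 0 1 0"
    "B * X 1 0 0 1 + C * X 0 1 0 1 = B * Y 0 1 1 0 + C * Y 0 1 0 1"
    "B * X 0 1 0 1 + C * X 1 0 0 1 = B * Y 1 0 1 0 + C * Y 1 0 0 1"
    "B * X 1 0 1 0 + C * X 0 1 1 0 = B * Y 0 1 0 1 + C * Y 0 1 1 0"
    using R[of 0 1 1 0] R[of 1 0 0 1] R[of 0 1 0 1] R[of 1 0 1 0] by (simp_all add: algebra_simps)
  define d where "d = X 0 1 1 0 + X 1 0 0 1 - Y 1 0 0 1 - Y 0 1 1 0"
  define d' where "d' = X 1 0 1 0 + X 0 1 0 1 - Y 1 0 1 0 - Y 0 1 0 1"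
  have "B * d + C * d' = (B * X 0 1 1 0 + C * X 1 0 1 0 - (B * Y 1 0 0 1 + C * Y 1 0 1 0))
                       + (B * X 1 0 0 1 + C * X 0 1 0 1 - (B * Y 0 1 1 0 + C * Y 0 1 0 1))"
    unfolding d_def d'_def by (simp add: algebra_simps)
  then have BdCd': "B * d + C * d' = 0" using off(1,2) by simp
  have "B * d' + C * d = (B * X 0 1 0 1 + C * X 1 0 0 1 - (B * Y 1 0 1 0 + C * Y 1 0 0 1))
                       + (B * X 1 0 1 0 + C * X 0 1 1 0 - (B * Y 0 1 0 1 + C * Y 0 1 1 0))"
    unfolding d_def d'_def by (simp add: algebra_simps)
  then have Bd'Cd: "B * d' + C * d = 0" using off(3,4) by simp
  have "(B * B - C * C) * d = B * (B * d + C * d') - C * (B * d' + C * d)"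
    by (simp add: algebra_simps)
  then have "(B * B - C * C) * d = 0" using BdCd' Bd'Cd by simp
  moreover have "B * B - C * C \<noteq> 0" using BC_nz unfolding B_def C_def by (simp add: power2_eq_square)
  ultimately have "d = 0" by simp
  moreover have "X 0 0 1 1 = Y 0 0 1 1" "X 1 1 0 0 = Y 1 1 0 0"
    using diag A_nz unfolding A_def by simp_all
  ultimately show ?thesis unfolding d_def by (simp add: algebra_simps)
qed

lemma r_matrix_nondegenerate:
  fixes u q :: complex
  assumes "u \<noteq> 0" "q \<noteq> 0" "u \<notin> {q, -q, inverse q, - inverse q}"
  shows "u * q - inverse (u * q) \<noteq> 0" "(u - inverse u)^2 \<noteq> (q - inverse q)^2"
proof -
  have factors: "u * q - 1 \<noteq> 0" "u * q + 1 \<noteq> 0" "u - q \<noteq> 0" "u + q \<noteq> 0"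
    using assms by (auto simp: field_simps add_eq_0_iff)
  have "u * q - inverse (u * q) = (u * q - 1) * (u * q + 1) / (u * q)"
    using assms by (simp add: field_simps)
  then show "u * q - inverse (u * q) \<noteq> 0" using factors assms by simp
  have "(u - inverse u)^2 - (q - inverse q)^2 = (u - q) * (u + q) * (u * q + 1) * (u * q - 1) / (u * q)^2"
    using assms by (simp add: field_simps power2_eq_square)
  then show "(u - inverse u)^2 \<noteq> (q - inverse q)^2" using factors assms by auto
qed

lemma transfer_commute_generic:
  assumes inh: "\<forall>n\<in>{1..N}. inh n \<noteq> 0" and "l \<noteq> 0" "m \<noteq> 0" "q \<noteq> 0"
    and generic: "l / m \<notin> {q, -q, inverse q, - inverse q}"
    and ST: "S \<in> configs N" "T \<in> configs N"
  shows "op_mult N (antiperiodic_transfer N q inh l) (antiperiodic_transfer N q inh m) S T =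
         op_mult N (antiperiodic_transfer N q inh m) (antiperiodic_transfer N q inh l) S T"
  unfolding transfer_product_entry[OF ST]
proof (rule twisted_trace_from_rtt)
  show "l / m * q - inverse (l / m * q) \<noteq> 0" "(l / m - inverse (l / m))^2 \<noteq> (q - inverse q)^2"
    using r_matrix_nondegenerate[OF _ \<open>q \<noteq> 0\<close> generic] assms by simp_all
qed (use rtt_relation assms in auto)

lemma holomorphic_on_if_const [holomorphic_intros]:
  "f holomorphic_on S \<Longrightarrow> g holomorphic_on S \<Longrightarrow> (\<lambda>z. if P then f z else g z) holomorphic_on S"
  by (cases P) simp_all

text \<open>Monodromy entries are Laurent polynomials in \<open>z\<close>, hence holomorphic on \<open>C - {0}\<close>.\<close>
lemma mono_entry_holomorphic:
  assumes "\<forall>n\<in>{1..k}. inh n \<noteq> 0" "q \<noteq> 0"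
  shows "(\<lambda>z. mono_entry q inh z k S T a b) holomorphic_on - {0}"
  using assms
proof (induction k arbitrary: a b)
  case (Suc k)
  then have "inh (Suc k) \<noteq> 0" by auto
  with Suc show ?case
    unfolding mono_entry.simps lax_entry_def x_plus_def x_minus_def
    by (intro holomorphic_intros) auto
qed simp

lemma transfer_commutator_holomorphic:
  assumes inh: "\<forall>n\<in>{1..N}. inh n \<noteq> 0" and q: "q \<noteq> 0" and ST: "S \<in> configs N" "T \<in> configs N"
  shows "(\<lambda>l. op_mult N (antiperiodic_transfer N q inh l) (antiperiodic_transfer N q inh m) S T
             - op_mult N (antiperiodic_transfer N q inh m) (antiperiodic_transfer N q inh l) S T)
         holomorphic_on - {0}"
proof -
  let ?A = "antiperiodic_transfer N q inh m"
  let ?G = "\<lambda>l S T. mono_entry q inh l N S T 0 1 + mono_entry q inh l N S T 1 0"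
  have "(\<lambda>l. op_mult N (antiperiodic_transfer N q inh l) ?A S T - op_mult N ?A (antiperiodic_transfer N q inh l) S T)
      = (\<lambda>l. \<Sum>U\<in>configs N. ?G l S U * ?A U T - ?A S U * ?G l U T)"
    using ST by (auto simp: op_mult_def transfer_entry sum_subtractf intro!: ext sum.cong)
  moreover have "(\<lambda>l. \<Sum>U\<in>configs N. ?G l S U * ?A U T - ?A S U * ?G l U T) holomorphic_on - {0}"
    by (intro holomorphic_intros mono_entry_holomorphic inh q)
  ultimately show ?thesis by simp
qed

text \<open>By analytic continuation from the generic case, \<open>T(l)\<close> and \<open>T(m)\<close> always commute.\<close>
lemma transfer_commute:
  assumes inh: "\<forall>n\<in>{1..N}. inh n \<noteq> 0" and q: "q \<noteq> 0" and l: "l \<noteq> 0" and m: "m \<noteq> 0"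
    and ST: "S \<in> configs N" "T \<in> configs N"
  shows "op_mult N (antiperiodic_transfer N q inh l) (antiperiodic_transfer N q inh m) S T =
         op_mult N (antiperiodic_transfer N q inh m) (antiperiodic_transfer N q inh l) S T"
proof -
  define f where "f l = op_mult N (antiperiodic_transfer N q inh l) (antiperiodic_transfer N q inh m) S T
                      - op_mult N (antiperiodic_transfer N q inh m) (antiperiodic_transfer N q inh l) S T" for l
  define B where "B = {0, m * q, -(m * q), m * inverse q, - (m * inverse q)}"
  have "finite B" unfolding B_def by simp
  then have "open (- B)" "- B \<noteq> {}"
    using finite_imp_closed ex_new_if_finite[OF infinite_UNIV_char_0] by auto
  moreover have "f x = 0" if "x \<in> - B" for x
  proof -
    have "x \<noteq> 0" "x / m \<notin> {q, -q, inverse q, - inverse q}"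
      using that m unfolding B_def by (auto simp: field_simps)
    then show ?thesis
      unfolding f_def using transfer_commute_generic[OF inh _ m q _ ST] by simp
  qed
  moreover have "f holomorphic_on - {0}"
    unfolding f_def by (rule transfer_commutator_holomorphic[OF inh q ST])
  ultimately have "f l = 0"
    using analytic_continuation_open[of "- B" "- {0}" f "\<lambda>_. 0" l] l
    by (auto simp: B_def connected_punctured_universe)
  then show ?thesis unfolding f_def by simp
qed


section \<open>Conjugation symmetries\<close>

lemma lax_entry_cnj_massless:
  assumes "q \<noteq> 0" "cnj q = inverse q" "w \<noteq> 0" "a < 2" "c < 2"
  shows "cnj (lax_entry q w a c t s) = (if a = c then 1 else -1) * lax_entry q (cnj w / q) (1-a) (1-c) s t"
  using less_2_cases[OF assms(4)] less_2_cases[OF assms(5)] assms(1-3)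
  by (cases s; cases t; elim disjE;
      simp add: lax_entry_def x_plus_def x_minus_def sigma_z_def sigma_plus_def sigma_minus_def assms(2);
      simp add: field_simps)

lemma lax_entry_cnj_massive:
  assumes "q \<noteq> 0" "cnj q = q" "w \<noteq> 0" "a < 2" "c < 2"
  shows "cnj (lax_entry q w a c t s) = lax_entry q (- inverse (q * cnj w)) (1-a) (1-c) s t"
  using less_2_cases[OF assms(4)] less_2_cases[OF assms(5)] assms(1-3)
  by (cases s; cases t; elim disjE;
      simp add: lax_entry_def x_plus_def x_minus_def sigma_z_def sigma_plus_def sigma_minus_def assms(2);
      simp add: field_simps)

lemma lax_entry_neg:
  assumes "a < 2" "c < 2"
  shows "lax_entry q (-w) a c s t = (if a = c then -1 else 1) * lax_entry q w a c s t"
  using less_2_cases[OF assms(1)] less_2_cases[OF assms(2)]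
  by (cases s; cases t; elim disjE;
      simp add: lax_entry_def x_plus_def x_minus_def sigma_z_def sigma_plus_def sigma_minus_def;
      simp add: field_simps)

lemma mono_entry_cnj:
  assumes sigma: "\<sigma> * \<sigma> = 1"
    and site: "\<And>n a c s t. n \<in> {1..k} \<Longrightarrow> a < 2 \<Longrightarrow> c < 2 \<Longrightarrow>
        cnj (lax_entry q (z / inh n) a c t s) = (if a = c then 1 else \<sigma>) * lax_entry q (z' / inh n) (1-a) (1-c) s t"
  shows "a < 2 \<Longrightarrow> b < 2 \<Longrightarrow>
    cnj (mono_entry q inh z k T S a b) = (if a = b then 1 else \<sigma>) * mono_entry q inh z' k S T (1-a) (1-b)"
  using site
proof (induction k arbitrary: a b)
  case 0
  then show ?case by (auto dest!: less_2_cases)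
next
  case (Suc k)
  have sigma_sq: "\<sigma> * (\<sigma> * y) = y" for y
    using sigma by (simp add: mult.assoc[symmetric])
  have IH: "\<And>c. c < 2 \<Longrightarrow> cnj (mono_entry q inh z k T S c b) =
      (if c = b then 1 else \<sigma>) * mono_entry q inh z' k S T (1-c) (1-b)"
    using Suc.IH Suc.prems by auto
  have L: "\<And>c. c < 2 \<Longrightarrow> cnj (lax_entry q (z / inh (Suc k)) a c (Suc k \<in> T) (Suc k \<in> S)) =
      (if a = c then 1 else \<sigma>) * lax_entry q (z' / inh (Suc k)) (1-a) (1-c) (Suc k \<in> S) (Suc k \<in> T)"
    using Suc.prems by auto
  show ?case
    using less_2_cases[OF Suc.prems(1)] less_2_cases[OF Suc.prems(2)] L[of 0] L[of 1] IH[of 0] IH[of 1]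
    by (elim disjE) (simp_all add: sum_lessThan_2 algebra_simps sigma_sq)
qed

lemma mono_entry_neg:
  "a < 2 \<Longrightarrow> b < 2 \<Longrightarrow>
    mono_entry q inh (-z) k S T a b = (-1)^k * (if a = b then 1 else -1) * mono_entry q inh z k S T a b"
proof (induction k arbitrary: a b)
  case (Suc k)
  have L: "\<And>c. c < 2 \<Longrightarrow> lax_entry q (- z / inh (Suc k)) a c (Suc k \<in> S) (Suc k \<in> T)
      = (if a = c then -1 else 1) * lax_entry q (z / inh (Suc k)) a c (Suc k \<in> S) (Suc k \<in> T)"
    using lax_entry_neg[OF Suc.prems(1)] by (metis minus_divide_left)
  show ?case
    using less_2_cases[OF Suc.prems(1)] less_2_cases[OF Suc.prems(2)] L[of 0] L[of 1] Suc.IH[of 0] Suc.IH[of 1]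
    by (elim disjE) (simp_all add: sum_lessThan_2 algebra_simps)
qed auto

lemma transfer_cnj:
  assumes "\<sigma> * \<sigma> = 1"
    and "\<And>n a c s t. n \<in> {1..N} \<Longrightarrow> a < 2 \<Longrightarrow> c < 2 \<Longrightarrow>
        cnj (lax_entry q (z / inh n) a c t s) = (if a = c then 1 else \<sigma>) * lax_entry q (z' / inh n) (1-a) (1-c) s t"
    and ST: "S \<in> configs N" "T \<in> configs N"
  shows "op_adj (antiperiodic_transfer N q inh z) S T = \<sigma> * antiperiodic_transfer N q inh z' S T"
  using mono_entry_cnj[OF assms(1,2), where a = 0 and b = 1] mono_entry_cnj[OF assms(1,2), where a = 1 and b = 0]
  by (simp add: op_adj_def transfer_entry[OF ST] transfer_entry[OF ST(2,1)] algebra_simps)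

lemma transfer_neg:
  assumes "S \<in> configs N" "T \<in> configs N"
  shows "antiperiodic_transfer N q inh (-z) S T = - ((-1)^N * antiperiodic_transfer N q inh z S T)"
  using mono_entry_neg[of 0 1 q inh z N S T] mono_entry_neg[of 1 0 q inh z N S T]
  by (simp add: transfer_entry[OF assms] algebra_simps)


lemma normal_if_adjoint_commutes:
  assumes adj: "\<And>S T. S \<in> configs N \<Longrightarrow> T \<in> configs N \<Longrightarrow> op_adj A S T = c * B S T"
    and comm: "\<And>S T. S \<in> configs N \<Longrightarrow> T \<in> configs N \<Longrightarrow> op_mult N A B S T = op_mult N B A S T"
  shows "normal_op N A"
  unfolding normal_op_def op_eq_def
proof (intro ballI)
  fix S T assume ST: "S \<in> configs N" "T \<in> configs N"
  have "op_mult N A (op_adj A) S T = c * op_mult N A B S T"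
    unfolding op_mult_def sum_distrib_left using adj ST(2) by (intro sum.cong) auto
  also have "\<dots> = c * op_mult N B A S T" using comm[OF ST] by simp
  also have "\<dots> = op_mult N (op_adj A) A S T"
    unfolding op_mult_def sum_distrib_left using adj ST(1) by (intro sum.cong) auto
  finally show "op_mult N A (op_adj A) S T = op_mult N (op_adj A) A S T" .
qed

lemma self_adjoint_scaled:
  assumes adj: "\<And>S T. S \<in> configs N \<Longrightarrow> T \<in> configs N \<Longrightarrow> op_adj A S T = d * A S T"
    and "cnj c * d = c"
  shows "self_adjoint_op N (op_scale c A)"
  unfolding self_adjoint_op_def op_eq_def
proof (intro ballI)
  fix S T assume "S \<in> configs N" "T \<in> configs N"
  then have "op_adj (op_scale c A) S T = cnj c * d * A S T"
    using adj by (simp add: op_adj_def op_scale_def)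
  then show "op_adj (op_scale c A) S T = op_scale c A S T"
    by (simp add: assms(2) op_scale_def)
qed

text \<open>Massless regime: \<open>T(z)^* = -T(cnj z / q)\<close>, so \<open>T(z)\<close> is normal and
  \<open>i T(z)\<close> is self-adjoint on the line \<open>cnj z = q z\<close>.\<close>
lemma massless_regime:
  assumes q: "q \<noteq> 0" "cnj q = inverse q" and inh: "\<forall>n\<in>{1..N}. inh n \<in> \<real> \<and> inh n \<noteq> 0"
    and z: "z \<noteq> 0"
  shows "normal_op N (antiperiodic_transfer N q inh z)"
    and "cnj z = q * z \<Longrightarrow> self_adjoint_op N (op_scale \<i> (antiperiodic_transfer N q inh z))"
proof -
  have site: "cnj (lax_entry q (z / inh n) a c t s) =
      (if a = c then 1 else -1) * lax_entry q (cnj z / q / inh n) (1-a) (1-c) s t"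
    if "n \<in> {1..N}" "a < 2" "c < 2" for n a c :: nat and s t
  proof -
    have w: "z / inh n \<noteq> 0" and w': "cnj (z / inh n) / q = cnj z / q / inh n"
      using inh z that(1) by (auto simp: Reals_cnj_iff)
    show ?thesis using lax_entry_cnj_massless[OF q w that(2,3), of t s] unfolding w' .
  qed
  have adj: "op_adj (antiperiodic_transfer N q inh z) S T = (-1) * antiperiodic_transfer N q inh (cnj z / q) S T"
    if "S \<in> configs N" "T \<in> configs N" for S T
    using transfer_cnj[where \<sigma> = "-1", OF _ site that] by simp
  have "cnj z / q \<noteq> 0" using q z by simp
  then show "normal_op N (antiperiodic_transfer N q inh z)"
    using inh by (intro normal_if_adjoint_commutes[OF adj] transfer_commute q z) auto
  show "self_adjoint_op N (op_scale \<i> (antiperiodic_transfer N q inh z))" if "cnj z = q * z"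
    using adj q that by (intro self_adjoint_scaled[where d = "-1"]) simp_all
qed

text \<open>Massive regime: \<open>T(z)^* = T(-1/(q cnj z))\<close>, so \<open>T(z)\<close> is normal; on the
  circle \<open>q |z|\<^sup>2 = 1\<close> the adjoint is \<open>T(-z)\<close>, which the parity relates to \<open>T(z)\<close>.\<close>
lemma massive_regime:
  assumes q: "q \<noteq> 0" "cnj q = q" and unit: "\<forall>n\<in>{1..N}. cmod (inh n) = 1"
    and z: "z \<noteq> 0"
  shows "normal_op N (antiperiodic_transfer N q inh z)"
    and "q * z * cnj z = 1 \<Longrightarrow>
      self_adjoint_op N (op_scale (\<i> ^ (if even N then 1 else 0)) (antiperiodic_transfer N q inh z))"
proof -
  have inh_nz: "\<forall>n\<in>{1..N}. inh n \<noteq> 0"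
    using unit by auto
  have site: "cnj (lax_entry q (z / inh n) a c t s) =
      lax_entry q (- inverse (q * cnj z) / inh n) (1-a) (1-c) s t"
    if "n \<in> {1..N}" "a < 2" "c < 2" for n a c :: nat and s t
  proof -
    have "inh n * cnj (inh n) = of_real ((cmod (inh n))^2)"
      by (rule complex_norm_square[symmetric])
    then have "cnj (inh n) = inverse (inh n)"
      using unit inh_nz that(1) by (simp add: field_simps)
    then have w: "z / inh n \<noteq> 0" and w': "- inverse (q * cnj (z / inh n)) = - inverse (q * cnj z) / inh n"
      using inh_nz z q that(1) by (auto simp: field_simps)
    show ?thesis using lax_entry_cnj_massive[OF q w that(2,3), of t s] unfolding w' .
  qed
  have adj: "op_adj (antiperiodic_transfer N q inh z) S T = antiperiodic_transfer N q inh (- inverse (q * cnj z)) S T"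
    if "S \<in> configs N" "T \<in> configs N" for S T
    using transfer_cnj[where \<sigma> = 1, unfolded if_cancel mult_1, OF refl site that] .
  have "- inverse (q * cnj z) \<noteq> 0"
    using q z by auto
  then show "normal_op N (antiperiodic_transfer N q inh z)"
    by (intro normal_if_adjoint_commutes[where c = 1 and B = "antiperiodic_transfer N q inh (- inverse (q * cnj z))"]
        transfer_commute q z inh_nz) (simp_all add: adj)
  show "self_adjoint_op N (op_scale (\<i> ^ (if even N then 1 else 0)) (antiperiodic_transfer N q inh z))"
    if "q * z * cnj z = 1"
  proof (rule self_adjoint_scaled[where d = "- ((-1)^N)"])
    have "(q * cnj z) * z = 1" using that by (simp add: algebra_simps)
    then have "inverse (q * cnj z) = z" by (rule inverse_unique)
    then have z_fixed: "- inverse (q * cnj z) = - z" by simp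
    show "op_adj (antiperiodic_transfer N q inh z) S T = - ((-1)^N) * antiperiodic_transfer N q inh z S T"
      if "S \<in> configs N" "T \<in> configs N" for S T
      using adj[OF that, unfolded z_fixed] transfer_neg[OF that] by simp
  qed simp
qed


section \<open>The two regimes in terms of \<open>\<eta>\<close>\<close>

lemma exp_cnj_imaginary: "Re \<xi> = 0 \<Longrightarrow> cnj (exp \<xi>) = inverse (exp \<xi>)"
proof -
  assume "Re \<xi> = 0"
  then have "cnj \<xi> = - \<xi>" by (simp add: complex_eq_iff)
  then show ?thesis by (simp add: exp_cnj exp_minus)
qed

lemma exp_cnj_real: "\<xi> \<in> \<real> \<Longrightarrow> cnj (exp \<xi>) = exp \<xi>"
  by (simp add: exp_cnj Reals_cnj_iff)

lemma real_rotation: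
  assumes "cnj r = inverse r" "r \<noteq> 0" "z * r \<in> \<real>"
  shows "cnj z = r * r * z"
proof -
  have "cnj z * inverse r = z * r"
    using assms by (metis Reals_cnj_iff complex_cnj_mult)
  then show ?thesis using assms(2) by (simp add: field_simps)
qed

lemma unimodular_rotation:
  assumes "cnj r = r" "cmod (z * r) = 1"
  shows "r * r * z * cnj z = 1"
proof -
  have "(z * r) * cnj (z * r) = 1"
    using assms(2) complex_norm_square[of "z * r"] by simp
  then show ?thesis using assms(1) by (simp add: algebra_simps)
qed

theorem mainTheorem1:
  fixes N :: nat and \<eta> :: complex and inh :: "nat \<Rightarrow> complex"
  assumes N_pos: "N \<ge> 1"
    and q_not_1: "exp \<eta> \<noteq> 1" and q_not_m1: "exp \<eta> \<noteq> -1"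
    and inh_nz: "\<forall>n\<in>{1..N}. inh n \<noteq> 0"
  shows
   "(Re \<eta> = 0 \<and> (\<forall>n\<in>{1..N}. inh n \<in> \<real>) \<longrightarrow>
       (\<forall>z::complex. z \<noteq> 0 \<longrightarrow>
          normal_op N (antiperiodic_transfer N (exp \<eta>) inh z)) \<and>
       (\<forall>z::complex. z \<noteq> 0 \<and> z * exp (\<eta> / 2) \<in> \<real> \<longrightarrow>
          self_adjoint_op N (op_scale \<i> (antiperiodic_transfer N (exp \<eta>) inh z))))
    \<and>
    (\<eta> \<in> \<real> \<and> (\<forall>n\<in>{1..N}. cmod (inh n) = 1) \<longrightarrow>
       (\<forall>z::complex. z \<noteq> 0 \<longrightarrow>
          normal_op N (antiperiodic_transfer N (exp \<eta>) inh z)) \<and>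
       (\<forall>z::complex. z \<noteq> 0 \<and> cmod (z * exp (\<eta> / 2)) = 1 \<longrightarrow>
          self_adjoint_op N (op_scale (\<i> ^ (if even N then 1 else 0))
            (antiperiodic_transfer N (exp \<eta>) inh z))))"
proof -
  have q_root: "exp (\<eta> / 2) * exp (\<eta> / 2) = exp \<eta>" "exp (\<eta> / 2) \<noteq> 0"
    by (simp_all add: exp_add[symmetric])
  show ?thesis
  proof (intro conjI impI)
    assume "Re \<eta> = 0 \<and> (\<forall>n\<in>{1..N}. inh n \<in> \<real>)"
    then have phases: "cnj (exp \<eta>) = inverse (exp \<eta>)" "cnj (exp (\<eta> / 2)) = inverse (exp (\<eta> / 2))"
      and inh: "\<forall>n\<in>{1..N}. inh n \<in> \<real> \<and> inh n \<noteq> 0"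
      using inh_nz by (simp_all add: exp_cnj_imaginary)
    note regime = massless_regime[OF exp_not_eq_zero phases(1) inh]
    show "\<forall>z. z \<noteq> 0 \<longrightarrow> normal_op N (antiperiodic_transfer N (exp \<eta>) inh z)"
      using regime(1) by simp
    show "\<forall>z. z \<noteq> 0 \<and> z * exp (\<eta> / 2) \<in> \<real> \<longrightarrow>
        self_adjoint_op N (op_scale \<i> (antiperiodic_transfer N (exp \<eta>) inh z))"
      using regime(2) real_rotation[OF phases(2) q_root(2), unfolded q_root(1)] by blast
  next
    assume "\<eta> \<in> \<real> \<and> (\<forall>n\<in>{1..N}. cmod (inh n) = 1)"
    then have real: "cnj (exp \<eta>) = exp \<eta>" "cnj (exp (\<eta> / 2)) = exp (\<eta> / 2)"
      and inh: "\<forall>n\<in>{1..N}. cmod (inh n) = 1"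
      by (simp_all add: exp_cnj_real)
    note regime = massive_regime[OF exp_not_eq_zero real(1) inh]
    show "\<forall>z. z \<noteq> 0 \<longrightarrow> normal_op N (antiperiodic_transfer N (exp \<eta>) inh z)"
      using regime(1) by simp
    show "\<forall>z. z \<noteq> 0 \<and> cmod (z * exp (\<eta> / 2)) = 1 \<longrightarrow>
        self_adjoint_op N (op_scale (\<i> ^ (if even N then 1 else 0)) (antiperiodic_transfer N (exp \<eta>) inh z))"
      using regime(2) unimodular_rotation[OF real(2), unfolded q_root(1)] by blast
  qed
qed

end
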